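(* Suppose $n\ge 2$ and $k\ge 4$, and let ${\bf a}_1,\ldots,{\bf a}_k$ be sequences of positive integers each with sum at most $n$. Then the multiple flag variety $M_{{\bf a}_1}\times\cdots\times M_{{\bf a}_k}$ has infinitely many orbits under the diagonal action of $G$.
   Context: $\mathbb F$ is an infinite field of characteristic $\ne 2$. Equip $\mathbb F^{2n}$ (canonical basis $e_1,\ldots,e_{2n}$) with the symmetric bilinear form $(e_i,e_j)=\delta_{i,2n+1-j}$, and let $G={\rm O}_{2n}(\mathbb F)$ be its isometry group in ${\rm GL}_{2n}(\mathbb F)$. A subspace $V$ is isotropic if $(V,V)=\{0\}$. For a sequence ${\bf a}=(\alpha_1,\ldots,\alpha_p)$ of positive integers with $\alpha_1+\cdots+\alpha_p\le n$, $M_{\bf a}$ is the set of flags $V_1\subset\cdots\subset V_p$ of subspaces of $\mathbb F^{2n}$ with $\dim V_j=\alpha_1+\cdots+\alpha_j$ and $V_p$ isotropic; $G$ acts on the product diagonally. *)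

theory Defs
  imports Complex_Main "HOL-Library.Function_Algebras"
begin

text \<open>Vectors of F^(2n) are modelled as functions nat => F vanishing outside {0..<2n};
  coordinate i (0-based) corresponds to e_(i+1).\<close>

definition vscale :: "'a::field \<Rightarrow> (nat \<Rightarrow> 'a) \<Rightarrow> (nat \<Rightarrow> 'a)" where
  "vscale c v = (\<lambda>i. c * v i)"

definition Fvec :: "nat \<Rightarrow> (nat \<Rightarrow> 'a::field) set" where
  "Fvec m = {v. \<forall>i\<ge>m. v i = 0}"

text \<open>The symmetric bilinear form (e_i,e_j) = delta_(i,2n+1-j), in 0-based indices.\<close>
definition bform :: "nat \<Rightarrow> (nat \<Rightarrow> 'a::field) \<Rightarrow> (nat \<Rightarrow> 'a) \<Rightarrow> 'a" where
  "bform n x y = (\<Sum>i<2*n. x i * y (2*n - 1 - i))"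

definition mat_act :: "nat \<Rightarrow> (nat \<Rightarrow> nat \<Rightarrow> 'a::field) \<Rightarrow> (nat \<Rightarrow> 'a) \<Rightarrow> (nat \<Rightarrow> 'a)" where
  "mat_act m g v = (\<lambda>i. if i < m then (\<Sum>j<m. g i j * v j) else 0)"

definition is_mat :: "nat \<Rightarrow> (nat \<Rightarrow> nat \<Rightarrow> 'a::field) \<Rightarrow> bool" where
  "is_mat m g \<longleftrightarrow> (\<forall>i j. (m \<le> i \<or> m \<le> j) \<longrightarrow> g i j = 0)"

definition mat_mult :: "nat \<Rightarrow> (nat \<Rightarrow> nat \<Rightarrow> 'a::field) \<Rightarrow> (nat \<Rightarrow> nat \<Rightarrow> 'a) \<Rightarrow> (nat \<Rightarrow> nat \<Rightarrow> 'a)" where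
  "mat_mult m g h = (\<lambda>i j. if i < m \<and> j < m then (\<Sum>l<m. g i l * h l j) else 0)"

definition mat_id :: "nat \<Rightarrow> (nat \<Rightarrow> nat \<Rightarrow> 'a::field)" where
  "mat_id m = (\<lambda>i j. if i < m \<and> i = j then 1 else 0)"

definition GL :: "nat \<Rightarrow> (nat \<Rightarrow> nat \<Rightarrow> 'a::field) set" where
  "GL m = {g. is_mat m g \<and> (\<exists>h. is_mat m h \<and> mat_mult m g h = mat_id m \<and> mat_mult m h g = mat_id m)}"

definition Ogroup :: "nat \<Rightarrow> (nat \<Rightarrow> nat \<Rightarrow> 'a::field) set" where
  "Ogroup n = {g \<in> GL (2*n). \<forall>x\<in>Fvec (2*n). \<forall>y\<in>Fvec (2*n).
       bform n (mat_act (2*n) g x) (mat_act (2*n) g y) = bform n x y}"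

definition is_subspace :: "nat \<Rightarrow> (nat \<Rightarrow> 'a::field) set \<Rightarrow> bool" where
  "is_subspace m V \<longleftrightarrow> module.subspace vscale V \<and> V \<subseteq> Fvec m"

definition sdim :: "(nat \<Rightarrow> 'a::field) set \<Rightarrow> nat" where
  "sdim V = vector_space.dim vscale V"

definition isotropic :: "nat \<Rightarrow> (nat \<Rightarrow> 'a::field) set \<Rightarrow> bool" where
  "isotropic n V \<longleftrightarrow> (\<forall>x\<in>V. \<forall>y\<in>V. bform n x y = 0)"

definition flag_var :: "nat \<Rightarrow> nat list \<Rightarrow> (nat \<Rightarrow> 'a::field) set list set" where
  "flag_var n a = {Vs. length Vs = length a
      \<and> (\<forall>j<length a. is_subspace (2*n) (Vs!j) \<and> sdim (Vs!j) = sum_list (take (Suc j) a))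
      \<and> (\<forall>j. Suc j < length a \<longrightarrow> Vs!j \<subseteq> Vs!(Suc j))
      \<and> isotropic n (last Vs)}"

definition multi_flag_var :: "nat \<Rightarrow> nat list list \<Rightarrow> (nat \<Rightarrow> 'a::field) set list list set" where
  "multi_flag_var n as = {X. length X = length as \<and> (\<forall>i<length as. X!i \<in> flag_var n (as!i))}"

definition act_multi :: "nat \<Rightarrow> (nat \<Rightarrow> nat \<Rightarrow> 'a::field) \<Rightarrow> (nat \<Rightarrow> 'a) set list list \<Rightarrow> (nat \<Rightarrow> 'a) set list list" where
  "act_multi n g X = map (map (\<lambda>V. mat_act (2*n) g ` V)) X"

definition orbit :: "nat \<Rightarrow> (nat \<Rightarrow> 'a::field) set list list \<Rightarrow> (nat \<Rightarrow> 'a) set list list set" where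
  "orbit n X = {act_multi n g X | g. g \<in> Ogroup n}"

end

theory Submission
  imports Defs
begin

text \<open>
  For l in F let u_l = e_1 + l e_(2n-1) and v_l = e_2 - l e_(2n), and let L(l) be the Lagrangian
  subspace spanned by u_l, v_l, e_3, ..., e_n. On L(l) x L(m) the form is (l - m) times the
  2 x 2 determinant of the first two coordinates. For s \<noteq> 0 take flags in L(0), L(1), L(-1), L(s)
  whose first subspaces contain u_0, v_1, v_(-1), u_s respectively. An isometry carrying the
  configuration for t onto the one for s maps these four vectors into L(0), L(1), L(-1), L(s), and
  preservation of the form gives five relations between the determinants of their images.
  Together with the Pluecker relation for 2 x 2 determinants they force s = t, so the orbit map
  is injective on the infinite set F - {0}.
\<close>

interpretation VS: vector_space "vscale :: 'a::field \<Rightarrow> (nat \<Rightarrow> 'a) \<Rightarrow> (nat \<Rightarrow> 'a)"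
  by unfold_locales (auto simp: vscale_def fun_eq_iff algebra_simps)

lemma private_coordinates_inj_independent:
  fixes f :: "nat \<Rightarrow> nat \<Rightarrow> 'a::field"
  assumes diag: "\<And>i. i \<in> I \<Longrightarrow> f i i \<noteq> 0"
    and off_diag: "\<And>i j. i \<in> I \<Longrightarrow> j \<in> I \<Longrightarrow> j \<noteq> i \<Longrightarrow> f j i = 0"
  shows "inj_on f I" and "\<not> VS.dependent (f ` I)"
proof -
  show "inj_on f I"
    by (rule inj_onI) (metis diag off_diag)
  show "\<not> VS.dependent (f ` I)"
  proof
    assume "VS.dependent (f ` I)"
    then obtain i where i: "i \<in> I" "f i \<in> VS.span (f ` I - {f i})"
      by (auto simp: VS.dependent_def)
    have "VS.subspace {x. x i = 0}"
      by (auto simp: VS.subspace_def vscale_def)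
    moreover have "f ` I - {f i} \<subseteq> {x. x i = 0}"
      using i(1) off_diag by auto
    ultimately have "VS.span (f ` I - {f i}) \<subseteq> {x. x i = 0}"
      by (rule VS.span_minimal[rotated])
    then show False
      using i diag by auto
  qed
qed

definition det2 :: "(nat \<Rightarrow> 'a::field) \<Rightarrow> (nat \<Rightarrow> 'a) \<Rightarrow> 'a" where
  "det2 x y = x 0 * y 1 - x 1 * y 0"

lemma det2_plucker:
  "det2 a b * det2 c d - det2 a c * det2 b d + det2 a d * det2 b c = 0"
  by (simp add: det2_def algebra_simps)

lemma cross_ratio_rigidity:
  fixes a b c d :: "nat \<Rightarrow> 'a::field"
  assumes two: "(2::'a) \<noteq> 0" and s: "s \<noteq> 0"
    and ab: "det2 a b = 1" and ac: "det2 a c = 1" and ad: "s * det2 a d = 0"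
    and bd: "(1 - s) * det2 b d = t - 1" and cd: "(-1 - s) * det2 c d = t + 1"
  shows "s = t"
proof -
  have "det2 c d = det2 b d"
    using det2_plucker[of a b c d] ab ac ad s by simp
  then have "(1 - s) * (t + 1) = (-1 - s) * (t - 1)"
    using bd cd by (metis mult.left_commute)
  then have "2 * t = 2 * s"
    by (simp add: algebra_simps)
  then show ?thesis
    using two by simp
qed

definition lagrangian :: "nat \<Rightarrow> 'a::field \<Rightarrow> (nat \<Rightarrow> 'a) set" where
  "lagrangian n l = {x. (\<forall>i\<ge>2*n. x i = 0) \<and> x (2*n-2) = l * x 0 \<and> x (2*n-1) = - l * x 1
     \<and> (\<forall>i. n \<le> i \<and> i < 2*n-2 \<longrightarrow> x i = 0)}"

lemma subspace_lagrangian: "VS.subspace (lagrangian n l)"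
  by (auto simp: VS.subspace_def lagrangian_def vscale_def algebra_simps)

lemma lagrangian_subset_Fvec: "lagrangian n l \<subseteq> Fvec (2*n)"
  by (auto simp: lagrangian_def Fvec_def)

lemma bform_lagrangian:
  assumes n: "n \<ge> 2" and x: "x \<in> lagrangian n l" and y: "y \<in> lagrangian n m"
  shows "bform n x y = (l - m) * det2 x y"
proof -
  let ?f = "\<lambda>i. x i * y (2*n - 1 - i)"
  let ?S = "{0, 1, 2*n-2, 2*n-1}"
  have vanish: "?f i = 0" if "i \<in> {..<2*n} - ?S" for i
  proof (cases "i < n")
    case True
    then have "n \<le> 2*n-1-i \<and> 2*n-1-i < 2*n-2" using that by auto
    then show ?thesis using y by (auto simp: lagrangian_def)
  next
    case False
    then have "n \<le> i \<and> i < 2*n-2" using that by auto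
    then show ?thesis using x by (auto simp: lagrangian_def)
  qed
  have "bform n x y = (\<Sum>i\<in>?S. ?f i)"
    unfolding bform_def using n vanish by (intro sum.mono_neutral_right) auto
  also have "\<dots> = x 0 * y (2*n-1) + x 1 * y (2*n-2) + x (2*n-2) * y 1 + x (2*n-1) * y 0"
  proof -
    obtain m where "n = Suc (Suc m)" using n by (metis add_2_eq_Suc le_Suc_ex)
    then show ?thesis by (simp add: algebra_simps)
  qed
  also have "\<dots> = (l - m) * det2 x y"
    using x y by (simp add: lagrangian_def det2_def algebra_simps)
  finally show ?thesis .
qed

lemma isotropic_lagrangian: "n \<ge> 2 \<Longrightarrow> isotropic n (lagrangian n l)"
  by (simp add: isotropic_def bform_lagrangian)

text \<open>Indices are 0-based: lag_vec n l 0 = u_l, lag_vec n l 1 = v_l, lag_vec n l i = e_(i+1) otherwise.\<close>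

definition lag_vec :: "nat \<Rightarrow> 'a::field \<Rightarrow> nat \<Rightarrow> nat \<Rightarrow> 'a" where
  "lag_vec n l i = (\<lambda>j. if j = i then 1 else if i = 0 \<and> j = 2*n-2 then l
     else if i = 1 \<and> j = 2*n-1 then - l else 0)"

definition lag_basis :: "nat \<Rightarrow> 'a::field \<Rightarrow> nat \<Rightarrow> (nat \<Rightarrow> 'a) list" where
  "lag_basis n l r = map (lag_vec n l) (r # filter (\<lambda>i. i \<noteq> r) [0..<n])"

lemma lag_vec_in_lagrangian: "n \<ge> 2 \<Longrightarrow> i < n \<Longrightarrow> lag_vec n l i \<in> lagrangian n l"
  by (auto simp: lagrangian_def lag_vec_def)

lemma lag_basis_props:
  assumes n: "n \<ge> 2" and r: "r < n"
  shows "length (lag_basis n l r) = n" and "distinct (lag_basis n l r)"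
    and "\<not> VS.dependent (set (lag_basis n l r))" and "set (lag_basis n l r) \<subseteq> lagrangian n l"
proof -
  let ?is = "r # filter (\<lambda>i. i \<noteq> r) [0..<n]"
  have set_is: "set ?is = {..<n}" and "distinct ?is"
    using r by auto
  have "length ?is = n"
    by (metis \<open>distinct ?is\<close> set_is card_lessThan distinct_card)
  then show "length (lag_basis n l r) = n"
    unfolding lag_basis_def by (metis length_map)
  have diag: "lag_vec n l i i \<noteq> 0" for i
    by (simp add: lag_vec_def)
  have off_diag: "lag_vec n l j i = 0" if "i \<in> {..<n}" "j \<in> {..<n}" "j \<noteq> i" for i j
    using that n by (auto simp: lag_vec_def)
  note coords = private_coordinates_inj_independent[where f="lag_vec n l" and I="{..<n}", OF diag off_diag]
  show "distinct (lag_basis n l r)"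
    unfolding lag_basis_def distinct_map set_is using coords(1) \<open>distinct ?is\<close> by blast
  have set_basis: "set (lag_basis n l r) = lag_vec n l ` {..<n}"
    unfolding lag_basis_def set_map set_is ..
  show "\<not> VS.dependent (set (lag_basis n l r))"
    unfolding set_basis by (rule coords(2))
  show "set (lag_basis n l r) \<subseteq> lagrangian n l"
    unfolding set_basis using n lag_vec_in_lagrangian by blast
qed

lemma sum_list_take_mono:
  fixes a :: "'a::canonically_ordered_monoid_add list"
  assumes "k \<le> k'"
  shows "sum_list (take k a) \<le> sum_list (take k' a)"
proof -
  have "take k' a = take k a @ take (k' - k) (drop k a)"
    using assms by (metis le_add_diff_inverse take_add)
  then show ?thesis
    by (metis le_iff_add sum_list_append)
qed

definition std_flag :: "(nat \<Rightarrow> 'a::field) list \<Rightarrow> nat list \<Rightarrow> (nat \<Rightarrow> 'a) set list" where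
  "std_flag B a = map (\<lambda>j. VS.span (set (take (sum_list (take (Suc j) a)) B))) [0..<length a]"

lemma std_flag_subset_span: "V \<in> set (std_flag B a) \<Longrightarrow> V \<subseteq> VS.span (set B)"
  by (auto simp: std_flag_def intro: VS.span_mono[OF set_take_subset, THEN subsetD])

lemma hd_in_std_flag:
  assumes "B \<noteq> []" and "a \<noteq> []" and "hd a > 0"
  shows "hd B \<in> std_flag B a ! 0"
proof -
  have "hd B \<in> set (take (hd a) B)"
    using assms by (cases B; cases "hd a") auto
  moreover have "sum_list (take 1 a) = hd a"
    using assms(2) by (cases a) auto
  ultimately show ?thesis
    using assms(2) by (simp add: std_flag_def VS.span_base)
qed

lemma std_flag_in_flag_var:
  assumes B: "distinct B" "\<not> VS.dependent (set B)"
    and span_B: "VS.span (set B) \<subseteq> Fvec (2*n)" "isotropic n (VS.span (set B))"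
    and a: "a \<noteq> []" "sum_list a \<le> length B"
  shows "std_flag B a \<in> flag_var n a"
proof -
  let ?m = "\<lambda>j. sum_list (take (Suc j) a)"
  have component: "is_subspace (2*n) (std_flag B a ! j) \<and> sdim (std_flag B a ! j) = ?m j"
    if j: "j < length a" for j
  proof -
    let ?Bj = "set (take (?m j) B)"
    have "?m j \<le> length B"
      using sum_list_take_mono[of "Suc j" "length a" a] j a(2) by simp
    then have "card ?Bj = ?m j"
      using distinct_card[OF distinct_take[OF B(1)]] by simp
    moreover have "VS.dim (VS.span ?Bj) = card ?Bj"
      using VS.independent_mono[OF B(2) set_take_subset] by (rule VS.dim_span_eq_card_independent)
    moreover have "VS.span ?Bj \<subseteq> Fvec (2*n)"
      using span_B(1) VS.span_mono[OF set_take_subset] by blast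
    moreover have "std_flag B a ! j = VS.span ?Bj"
      using j by (simp add: std_flag_def)
    ultimately show ?thesis
      by (simp add: is_subspace_def sdim_def)
  qed
  have increasing: "std_flag B a ! j \<subseteq> std_flag B a ! Suc j" if "Suc j < length a" for j
    using that sum_list_take_mono[of "Suc j" "Suc (Suc j)" a]
    by (simp add: std_flag_def VS.span_mono set_take_subset_set_take)
  have "last (std_flag B a) \<in> set (std_flag B a)"
    using a(1) by (intro last_in_set) (simp add: std_flag_def)
  then have "isotropic n (last (std_flag B a))"
    using span_B(2) std_flag_subset_span unfolding isotropic_def by blast
  then show ?thesis
    using component increasing unfolding flag_var_def by (simp add: std_flag_def)
qed

lemma span_lag_basis_subset: "n \<ge> 2 \<Longrightarrow> r < n \<Longrightarrow> VS.span (set (lag_basis n l r)) \<subseteq> lagrangian n l"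
  by (rule VS.span_minimal[OF lag_basis_props(4) subspace_lagrangian])

definition param :: "'a::field \<Rightarrow> nat \<Rightarrow> 'a" where
  "param s i = (if i = 0 then 0 else if i = 1 then 1 else if i = 2 then -1 else s)"

definition lead :: "nat \<Rightarrow> nat" where
  "lead i = (if i = 1 \<or> i = 2 then 1 else 0)"

definition config :: "nat \<Rightarrow> 'a::field \<Rightarrow> nat list list \<Rightarrow> (nat \<Rightarrow> 'a) set list list" where
  "config n s as = map (\<lambda>i. std_flag (lag_basis n (param s i) (lead i)) (as ! i)) [0..<length as]"

lemma config_in_multi_flag_var:
  assumes n: "n \<ge> 2" and as: "\<forall>a\<in>set as. a \<noteq> [] \<and> sum_list a \<le> n"
  shows "config n s as \<in> multi_flag_var n as"
proof -
  have "std_flag (lag_basis n l r) a \<in> flag_var n a"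
    if "r < n" "a \<noteq> []" "sum_list a \<le> n" for l :: 'a and r a
  proof (rule std_flag_in_flag_var)
    note span = span_lag_basis_subset[OF n \<open>r < n\<close>, of l]
    show "VS.span (set (lag_basis n l r)) \<subseteq> Fvec (2*n)"
      using span lagrangian_subset_Fvec by blast
    show "isotropic n (VS.span (set (lag_basis n l r)))"
      using span isotropic_lagrangian[OF n] unfolding isotropic_def by blast
  qed (use that lag_basis_props[OF n \<open>r < n\<close>, where l=l] in auto)
  moreover have "lead i < n" for i
    using n by (simp add: lead_def)
  ultimately show ?thesis
    using as by (simp add: multi_flag_var_def config_def)
qed

lemma mat_act_mat_id: "v \<in> Fvec m \<Longrightarrow> mat_act m (mat_id m) v = (v :: nat \<Rightarrow> 'a::field)"
  by (auto simp: mat_act_def mat_id_def Fvec_def fun_eq_iff if_distrib[of "\<lambda>x. x * _"]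
      cong: if_cong)

lemma mat_id_in_Ogroup: "(mat_id (2*n) :: nat \<Rightarrow> nat \<Rightarrow> 'a::field) \<in> Ogroup n"
proof -
  have "mat_mult m (mat_id m) (mat_id m) = (mat_id m :: nat \<Rightarrow> nat \<Rightarrow> 'a)" for m
    by (auto simp: mat_mult_def mat_id_def fun_eq_iff if_distrib[of "\<lambda>x. x * _"]
        cong: if_cong)
  moreover have "is_mat m (mat_id m :: nat \<Rightarrow> nat \<Rightarrow> 'a)" for m
    by (auto simp: is_mat_def mat_id_def)
  ultimately show ?thesis
    unfolding Ogroup_def GL_def by (auto simp: mat_act_mat_id)
qed

lemma flag_var_subset_Fvec: "F \<in> flag_var n a \<Longrightarrow> V \<in> set F \<Longrightarrow> V \<subseteq> Fvec (2*n)"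
  by (auto simp: flag_var_def in_set_conv_nth is_subspace_def)

lemma in_orbit_self:
  assumes "X \<in> multi_flag_var n as"
  shows "X \<in> orbit n X"
proof -
  have "V \<subseteq> Fvec (2*n)" if "F \<in> set X" "V \<in> set F" for F V
    using assms that flag_var_subset_Fvec by (fastforce simp: multi_flag_var_def in_set_conv_nth)
  then have "act_multi n (mat_id (2*n)) X = X"
    unfolding act_multi_def by (auto intro!: map_idI simp: mat_act_mat_id subset_iff image_def)
  then show ?thesis
    using mat_id_in_Ogroup unfolding orbit_def by force
qed

lemma param_eq_if_config_related:
  fixes s t :: "'a::field"
  assumes n: "n \<ge> 2" and len: "length as \<ge> 4" and as: "\<forall>a\<in>set as. a \<noteq> [] \<and> hd a > 0"
    and two: "(2::'a) \<noteq> 0" and s: "s \<noteq> 0" and g: "g \<in> Ogroup n"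
    and related: "config n s as = act_multi n g (config n t as)"
  shows "s = t"
proof -
  define f where "f i = lag_vec n (param t i) (lead i)" for i
  define y where "y i = mat_act (2*n) g (f i)" for i
  have lead: "lead i < n" for i
    using n by (simp add: lead_def)
  have f_lag: "f i \<in> lagrangian n (param t i)" for i
    unfolding f_def using n lead by (rule lag_vec_in_lagrangian)
  have y_lag: "y i \<in> lagrangian n (param s i)" if "i < 4" for i
  proof -
    have i: "i < length as" "as ! i \<noteq> []" "hd (as ! i) > 0"
      using that len as nth_mem[of i as] by auto
    let ?B = "\<lambda>s. lag_basis n (param s i) (lead i)"
    have "?B t \<noteq> []"
      by (simp add: lag_basis_def)
    moreover have "hd (?B t) = f i"
      by (simp add: f_def lag_basis_def)
    ultimately have "f i \<in> std_flag (?B t) (as ! i) ! 0"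
      using hd_in_std_flag i(2,3) by metis
    then have "y i \<in> mat_act (2*n) g ` (std_flag (?B t) (as ! i) ! 0)"
      unfolding y_def by (rule imageI)
    also have "\<dots> = std_flag (?B s) (as ! i) ! 0"
      using arg_cong[OF related, of "\<lambda>X. X ! i ! 0"] i by (simp add: config_def act_multi_def std_flag_def)
    also have "\<dots> \<subseteq> lagrangian n (param s i)"
      using std_flag_subset_span[of _ "?B s" "as ! i"] span_lag_basis_subset[OF n lead] i(2)
      by (force simp: std_flag_def)
    finally show ?thesis .
  qed
  have rel: "(param s i - param s j) * det2 (y i) (y j) = (param t i - param t j) * det2 (f i) (f j)"
    if "i < 4" "j < 4" for i j
  proof -
    have "bform n (y i) (y j) = bform n (f i) (f j)"
      using g f_lag lagrangian_subset_Fvec unfolding Ogroup_def y_def by blast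
    then show ?thesis
      using bform_lagrangian[OF n y_lag y_lag] bform_lagrangian[OF n f_lag f_lag] that by simp
  qed
  have det2_f: "det2 (f i) (f j) = (if lead i = lead j then 0 else if lead i = 0 then 1 else -1)" for i j
    using n by (auto simp: f_def lag_vec_def lead_def det2_def)
  show ?thesis
  proof (rule cross_ratio_rigidity[OF two s])
    show "det2 (y 0) (y 1) = 1"
      using rel[of 0 1] det2_f[of 0 1] by (simp add: param_def lead_def)
    show "det2 (y 0) (y 2) = 1"
      using rel[of 0 2] det2_f[of 0 2] by (simp add: param_def lead_def)
    show "s * det2 (y 0) (y 3) = 0"
      using rel[of 0 3] det2_f[of 0 3] by (simp add: param_def lead_def)
    show "(1 - s) * det2 (y 1) (y 3) = t - 1"
      using rel[of 1 3] det2_f[of 1 3] by (simp add: param_def lead_def)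
    show "(-1 - s) * det2 (y 2) (y 3) = t + 1"
      using rel[of 2 3] det2_f[of 2 3] by (simp add: param_def lead_def)
  qed
qed

theorem proposition1p2:
  fixes n k :: nat and as :: "nat list list"
  assumes "infinite (UNIV :: 'a::field set)"
    and "(2::'a) \<noteq> 0"
    and "n \<ge> 2" and "k \<ge> 4" and "length as = k"
    and "\<forall>a\<in>set as. a \<noteq> [] \<and> (\<forall>x\<in>set a. x > 0) \<and> sum_list a \<le> n"
  shows "infinite ((orbit n :: (nat \<Rightarrow> 'a) set list list \<Rightarrow> _) ` multi_flag_var n as)"
proof
  assume fin: "finite ((orbit n :: (nat \<Rightarrow> 'a) set list list \<Rightarrow> _) ` multi_flag_var n as)"
  let ?orb = "\<lambda>s::'a. orbit n (config n s as)"
  have config: "config n s as \<in> multi_flag_var n as" for s :: 'a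
    using config_in_multi_flag_var[OF assms(3)] assms(6) by blast
  have "inj_on ?orb (- {0})"
  proof (rule inj_onI)
    fix s t assume "s \<in> - {0}" "t \<in> - {0}" "?orb s = ?orb t"
    then obtain g where g: "g \<in> Ogroup n" "config n s as = act_multi n g (config n t as)"
      using in_orbit_self[OF config[of s]] unfolding orbit_def by auto
    have hd_pos: "\<forall>a\<in>set as. a \<noteq> [] \<and> hd a > 0"
      using assms(6) by simp
    show "s = t"
      by (rule param_eq_if_config_related[OF assms(3) _ hd_pos assms(2) _ g])
        (use \<open>s \<in> - {0}\<close> assms(4,5) in auto)
  qed
  moreover have "?orb ` (- {0}) \<subseteq> orbit n ` multi_flag_var n as"
    using config by blast
  ultimately have "finite (- {0::'a})"
    using fin by (metis finite_imageD finite_subset)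
  then show False
    using assms(1) by simp
qed

end
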